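(* Let $n \leq 3$ be a positive integer. Every $n \times n$ nonnegative centrosymmetric matrix has only real eigenvalues. Moreover, real numbers $\lambda_1 \geq \cdots \geq \lambda_n$ are the eigenvalues of some $n \times n$ nonnegative centrosymmetric matrix if and only if $\lambda_1 \geq |\lambda_n|$ and $\sum_{j=1}^n \lambda_j \geq 0$.
   Context: $J$ is the $n \times n$ reverse identity matrix (ones on the anti-diagonal, zeros elsewhere). A matrix $Q$ is centrosymmetric if $JQJ = Q$ and nonnegative if all entries are nonnegative. *)

theory Defs
  imports "Jordan_Normal_Form.Char_Poly"
begin

definition rev_id_mat :: "nat \<Rightarrow> real mat" where
  "rev_id_mat n = mat n n (\<lambda>(i, j). if i + j = n - 1 then 1 else 0)"

definition centrosymmetric :: "real mat \<Rightarrow> bool" where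
  "centrosymmetric Q \<longleftrightarrow> rev_id_mat (dim_row Q) * Q * rev_id_mat (dim_row Q) = Q"

definition nonneg_mat :: "real mat \<Rightarrow> bool" where
  "nonneg_mat Q \<longleftrightarrow> (\<forall>i < dim_row Q. \<forall>j < dim_col Q. Q $$ (i, j) \<ge> 0)"

end

theory Submission
  imports Defs
begin

(* Centrosymmetric matrices of order 2 and 3 are exactly [[a,b],[b,a]] and [[a,b,c],[d,e,d],[c,b,a]].
   Their characteristic polynomials factor as (x - (a+b)) (x - (a-b)) and
   (x - (a-c)) (x^2 - (a+c+e) x + (a+c) e - 2 b d), and for nonnegative entries the discriminant
   of the quadratic factor is (a+c-e)^2 + 8 b d >= 0. So the spectrum is real, its largest element
   dominates all others in absolute value, and its sum is the nonnegative trace; for an ordered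
   spectrum this is exactly lambda_1 >= |lambda_n| and sum_j lambda_j >= 0. Conversely, matrices of
   these shapes with suitable entries realise every ordered spectrum satisfying both conditions. *)

lemma coeff_linear_factors_subleading:
  "coeff (\<Prod>y\<leftarrow>x # xs. [:-y, 1:]) (length xs) = - sum_list (x # xs :: 'a :: idom list)"
proof (induction xs arbitrary: x)
  case Nil
  then show ?case by simp
next
  case (Cons y ys)
  let ?q = "\<Prod>z\<leftarrow>y # ys. [:-z, 1:]"
  have step: "coeff ([:-x, 1:] * q) (Suc m) = coeff q m - x * coeff q (Suc m)" for q m
    by simp
  have "monic ?q" by (rule monic_prod_list) auto
  moreover have "degree ?q = Suc (length ys)"
    using degree_linear_factors[of uminus "y # ys"] by simp
  ultimately have "coeff ?q (Suc (length ys)) = 1" by simp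
  then have "coeff ([:-x, 1:] * ?q) (Suc (length ys)) = - (y + sum_list ys) - x"
    using step[of ?q "length ys"] Cons.IH[of y] by (simp del: prod_list.Cons)
  then show ?case by simp
qed

lemma descending_le:
  fixes f :: "nat \<Rightarrow> 'a :: order"
  assumes desc: "\<forall>k \<in> {1..<n}. f (Suc k) \<le> f k" and "1 \<le> i" "i \<le> j" "j \<le> n"
  shows "f j \<le> f i"
  using assms(3,4)
proof (induction j rule: dec_induct)
  case (step k)
  then have "f (Suc k) \<le> f k" using desc \<open>1 \<le> i\<close> by auto
  then show ?case using step by simp
qed simp

lemma spectral_bounds_of_dominant_root:
  fixes lam :: "nat \<Rightarrow> real"
  assumes n: "1 \<le> n" and desc: "\<forall>i \<in> {1..<n}. lam (Suc i) \<le> lam i"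
    and eq: "(\<Prod>i = 1..n. [:-lam i, 1:]) = (\<Prod>x\<leftarrow>xs. [:-x, 1:])"
    and dom: "\<rho> \<in> set xs" "\<forall>x \<in> set xs. \<bar>x\<bar> \<le> \<rho>" and tr: "0 \<le> sum_list xs"
  shows "\<bar>lam n\<bar> \<le> lam 1 \<and> 0 \<le> (\<Sum>j = 1..n. lam j)"
proof -
  define ls where "ls = map lam [1..<Suc n]"
  have ls_prod: "(\<Prod>x\<leftarrow>ls. [:-x, 1:]) = (\<Prod>x\<leftarrow>xs. [:-x, 1:])"
    unfolding eq[symmetric] ls_def map_map o_def
    by (subst prod.distinct_set_conv_list[symmetric])
      (simp_all add: atLeastLessThanSuc_atLeastAtMost del: upt_Suc)
  have root_iff: "poly (\<Prod>x\<leftarrow>zs. [:-x, 1:]) z = 0 \<longleftrightarrow> z \<in> set zs" for zs and z :: real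
    by (induction zs) auto
  have "set ls = set xs"
  proof (rule Set.set_eqI)
    fix z show "z \<in> set ls \<longleftrightarrow> z \<in> set xs"
      using root_iff[of ls z] root_iff[of xs z] ls_prod by simp
  qed
  then have roots: "lam ` {1..n} = set xs"
    by (simp add: ls_def atLeastLessThanSuc_atLeastAtMost del: upt_Suc)
  obtain k where k: "k \<in> {1..n}" "\<rho> = lam k"
    using dom(1) unfolding roots[symmetric] by blast
  have "lam n \<in> set xs" using n unfolding roots[symmetric] by simp
  then have "\<bar>lam n\<bar> \<le> lam 1"
    using dom(2) descending_le[OF desc, of 1 k] k by fastforce
  moreover have "(\<Sum>j = 1..n. lam j) = sum_list xs"
  proof -
    have "length ls = length xs"
      using arg_cong[OF ls_prod, of degree] by (simp only: degree_linear_factors)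
    with n obtain y ys z zs where ls: "ls = y # ys" and xs: "xs = z # zs"
      and len: "length ys = length zs"
      by (cases ls; cases xs) (auto simp: ls_def)
    have "coeff (\<Prod>x\<leftarrow>y # ys. [:-x, 1:]) (length ys) = coeff (\<Prod>x\<leftarrow>z # zs. [:-x, 1:]) (length zs)"
      using ls_prod unfolding ls xs len by simp
    then have "sum_list ls = sum_list xs"
      unfolding coeff_linear_factors_subleading ls xs by simp
    then show ?thesis
      by (simp add: ls_def sum_list_distinct_conv_sum_set atLeastLessThanSuc_atLeastAtMost del: upt_Suc)
  qed
  ultimately show ?thesis using tr by simp
qed

lemma quadratic_poly_split:
  fixes s q :: real
  assumes "0 \<le> s\<^sup>2 - 4 * q"
  shows "[:q, - s, 1:] = [:- ((s + sqrt (s\<^sup>2 - 4 * q)) / 2), 1:] * [:- ((s - sqrt (s\<^sup>2 - 4 * q)) / 2), 1:]"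
proof -
  have "sqrt (s\<^sup>2 - 4 * q) * sqrt (s\<^sup>2 - 4 * q) = s\<^sup>2 - 4 * q"
    using assms by simp
  then show ?thesis by (simp add: field_simps power2_eq_square)
qed

lemma det_dim_2:
  assumes "(A :: 'a :: comm_ring_1 mat) \<in> carrier_mat 2 2"
  shows "det A = A $$ (0, 0) * A $$ (1, 1) - A $$ (1, 0) * A $$ (0, 1)"
proof -
  have "cofactor A 0 0 = A $$ (1, 1)" "cofactor A 1 0 = - A $$ (0, 1)"
    unfolding cofactor_def using assms
    by (subst det_single; auto simp: mat_delete_def numeral_2_eq_2)+
  moreover have "det A = (\<Sum>i<2. A $$ (i, 0) * cofactor A i 0)"
    by (rule laplace_expansion_column[OF assms]) simp
  ultimately show ?thesis by (simp add: numeral_2_eq_2)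
qed

lemma det_dim_3:
  assumes "(A :: 'a :: comm_ring_1 mat) \<in> carrier_mat 3 3"
  shows "det A = A $$ (0, 0) * (A $$ (1, 1) * A $$ (2, 2) - A $$ (2, 1) * A $$ (1, 2))
      - A $$ (1, 0) * (A $$ (0, 1) * A $$ (2, 2) - A $$ (2, 1) * A $$ (0, 2))
      + A $$ (2, 0) * (A $$ (0, 1) * A $$ (1, 2) - A $$ (1, 1) * A $$ (0, 2))"
proof -
  have cof: "cofactor A 0 0 = A $$ (1, 1) * A $$ (2, 2) - A $$ (2, 1) * A $$ (1, 2)"
    "cofactor A 1 0 = - (A $$ (0, 1) * A $$ (2, 2) - A $$ (2, 1) * A $$ (0, 2))"
    "cofactor A 2 0 = A $$ (0, 1) * A $$ (1, 2) - A $$ (1, 1) * A $$ (0, 2)"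
    unfolding cofactor_def using assms
    by (subst det_dim_2; auto simp: mat_delete_def numeral_2_eq_2)+
  have "{..<3 :: nat} = {0, 1, 2}" by auto
  then have "det A = A $$ (0, 0) * cofactor A 0 0 + A $$ (1, 0) * cofactor A 1 0
      + A $$ (2, 0) * cofactor A 2 0"
    using laplace_expansion_column[OF assms, of 0] by (simp add: add.assoc)
  then show ?thesis unfolding cof by (simp add: algebra_simps)
qed

lemma char_poly_dim_1:
  assumes "(A :: 'a :: field mat) \<in> carrier_mat 1 1"
  shows "char_poly A = [:- A $$ (0, 0), 1:]"
  unfolding char_poly_defs using assms by (subst det_single) auto

lemma poly_char_poly_dim_2:
  assumes "(A :: 'a :: field mat) \<in> carrier_mat 2 2"
  shows "poly (char_poly A) x = (x - A $$ (0, 0)) * (x - A $$ (1, 1)) - A $$ (1, 0) * A $$ (0, 1)"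
  using assms by (simp add: char_poly_matrix det_dim_2 char_matrix_def algebra_simps)

lemma poly_char_poly_dim_3:
  assumes "(A :: 'a :: field mat) \<in> carrier_mat 3 3"
  shows "poly (char_poly A) x
    = (x - A $$ (0, 0)) * ((x - A $$ (1, 1)) * (x - A $$ (2, 2)) - A $$ (2, 1) * A $$ (1, 2))
      - A $$ (1, 0) * (A $$ (0, 1) * (x - A $$ (2, 2)) + A $$ (2, 1) * A $$ (0, 2))
      - A $$ (2, 0) * (A $$ (0, 1) * A $$ (1, 2) + (x - A $$ (1, 1)) * A $$ (0, 2))"
  using assms by (simp add: char_poly_matrix det_dim_3 char_matrix_def algebra_simps)

lemma rev_id_mat_conj_index:
  assumes A: "A \<in> carrier_mat n n" and ij: "i < n" "j < n"
  shows "(rev_id_mat n * A * rev_id_mat n) $$ (i, j) = A $$ (n - 1 - i, n - 1 - j)"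
proof -
  have JA: "(rev_id_mat n * A) $$ (k, l) = A $$ (n - 1 - k, l)" if "k < n" "l < n" for k l
  proof -
    have "(rev_id_mat n * A) $$ (k, l) = (\<Sum>m = 0..<n. (if k + m = n - 1 then 1 else 0) * A $$ (m, l))"
      using A that by (simp add: rev_id_mat_def scalar_prod_def)
    also have "\<dots> = (\<Sum>m = 0..<n. if m = n - 1 - k then A $$ (m, l) else 0)"
      using that by (intro sum.cong) auto
    finally show ?thesis using that by simp
  qed
  have "(rev_id_mat n * A * rev_id_mat n) $$ (i, j)
      = (\<Sum>m = 0..<n. (rev_id_mat n * A) $$ (i, m) * (if m + j = n - 1 then 1 else 0))"
    using A ij by (simp add: rev_id_mat_def scalar_prod_def)
  also have "\<dots> = (\<Sum>m = 0..<n. if m = n - 1 - j then A $$ (n - 1 - i, m) else 0)"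
    using ij JA by (intro sum.cong) auto
  finally show ?thesis using ij by simp
qed

lemma centrosymmetric_iff:
  assumes A: "A \<in> carrier_mat n n"
  shows "centrosymmetric A \<longleftrightarrow> (\<forall>i < n. \<forall>j < n. A $$ (n - 1 - i, n - 1 - j) = A $$ (i, j))"
proof -
  have dim: "dim_row A = n" using A by simp
  have "rev_id_mat n * A * rev_id_mat n = A \<longleftrightarrow> (\<forall>i < n. \<forall>j < n. A $$ (n - 1 - i, n - 1 - j) = A $$ (i, j))"
  proof
    assume "rev_id_mat n * A * rev_id_mat n = A"
    then show "\<forall>i < n. \<forall>j < n. A $$ (n - 1 - i, n - 1 - j) = A $$ (i, j)"
      using rev_id_mat_conj_index[OF A] by metis
  next
    assume "\<forall>i < n. \<forall>j < n. A $$ (n - 1 - i, n - 1 - j) = A $$ (i, j)"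
    then show "rev_id_mat n * A * rev_id_mat n = A"
      using A rev_id_mat_conj_index[OF A] by (intro eq_matI) (simp_all add: rev_id_mat_def)
  qed
  then show ?thesis unfolding centrosymmetric_def dim .
qed

definition centrosym_mat_2 :: "real \<Rightarrow> real \<Rightarrow> real mat" where
  "centrosym_mat_2 a b = mat 2 2 (\<lambda>(i, j). if i = j then a else b)"

text \<open>The matrix with rows \<open>[a, b, c]\<close>, \<open>[d, e, d]\<close>, \<open>[c, b, a]\<close>.\<close>
definition centrosym_mat_3 :: "real \<Rightarrow> real \<Rightarrow> real \<Rightarrow> real \<Rightarrow> real \<Rightarrow> real mat" where
  "centrosym_mat_3 a b c d e = mat 3 3 (\<lambda>(i, j).
     if i = 1 then (if j = 1 then e else d) else if j = 1 then b else if i = j then a else c)"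

lemma centrosym_mat_2_carrier: "centrosym_mat_2 a b \<in> carrier_mat 2 2"
  by (simp add: centrosym_mat_2_def)

lemma centrosym_mat_3_carrier: "centrosym_mat_3 a b c d e \<in> carrier_mat 3 3"
  by (simp add: centrosym_mat_3_def)

lemma nonneg_centrosym_mat_2: "nonneg_mat (centrosym_mat_2 a b) \<longleftrightarrow> 0 \<le> a \<and> 0 \<le> b"
  by (simp add: nonneg_mat_def centrosym_mat_2_def numeral_2_eq_2 All_less_Suc) linarith

lemma nonneg_centrosym_mat_3:
  "nonneg_mat (centrosym_mat_3 a b c d e) \<longleftrightarrow> 0 \<le> a \<and> 0 \<le> b \<and> 0 \<le> c \<and> 0 \<le> d \<and> 0 \<le> e"
  by (simp add: nonneg_mat_def centrosym_mat_3_def numeral_3_eq_3 All_less_Suc) linarith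

lemma char_poly_centrosym_mat_2:
  "char_poly (centrosym_mat_2 a b) = [:- (a + b), 1:] * [:- (a - b), 1:]"
  unfolding poly_eq_poly_eq_iff[symmetric]
  by (rule ext) (simp add: poly_char_poly_dim_2 centrosym_mat_2_def algebra_simps)

lemma char_poly_centrosym_mat_3:
  "char_poly (centrosym_mat_3 a b c d e)
    = [:- (a - c), 1:] * [:(a + c) * e - 2 * b * d, - (a + c + e), 1:]"
  unfolding poly_eq_poly_eq_iff[symmetric]
  by (rule ext) (simp add: poly_char_poly_dim_3 centrosym_mat_3_def algebra_simps power2_eq_square)

lemma centrosymmetric_dim_2:
  assumes A: "A \<in> carrier_mat 2 2"
  shows "centrosymmetric A \<longleftrightarrow> (\<exists>a b. A = centrosym_mat_2 a b)"
proof
  assume "centrosymmetric A"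
  then have flip: "A $$ (1 - i, 1 - j) = A $$ (i, j)" if "i < 2" "j < 2" for i j
    using that unfolding centrosymmetric_iff[OF A] by simp
  have "A = centrosym_mat_2 (A $$ (0, 0)) (A $$ (0, 1))"
    using A flip[of 0 0] flip[of 0 1]
    by (intro eq_matI) (auto simp: centrosym_mat_2_def numeral_2_eq_2 less_Suc_eq)
  then show "\<exists>a b. A = centrosym_mat_2 a b" by blast
qed (auto simp: centrosymmetric_iff[OF A] centrosym_mat_2_def numeral_2_eq_2 All_less_Suc)

lemma centrosymmetric_dim_3:
  assumes A: "A \<in> carrier_mat 3 3"
  shows "centrosymmetric A \<longleftrightarrow> (\<exists>a b c d e. A = centrosym_mat_3 a b c d e)"
proof
  assume "centrosymmetric A"
  then have flip: "A $$ (2 - i, 2 - j) = A $$ (i, j)" if "i < 3" "j < 3" for i j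
    using that unfolding centrosymmetric_iff[OF A] by simp
  have less_3: "(i :: nat) < 3 \<longleftrightarrow> i = 0 \<or> i = 1 \<or> i = 2" for i
    by auto
  have "A = centrosym_mat_3 (A $$ (0, 0)) (A $$ (0, 1)) (A $$ (0, 2)) (A $$ (1, 0)) (A $$ (1, 1))"
    using A flip[of 0 0] flip[of 0 1] flip[of 0 2] flip[of 1 0]
    by (intro eq_matI) (auto simp: centrosym_mat_3_def less_3)
  then show "\<exists>a b c d e. A = centrosym_mat_3 a b c d e" by blast
qed (auto simp: centrosymmetric_iff[OF A] centrosym_mat_3_def numeral_3_eq_3 All_less_Suc)

lemma centrosymmetric_centrosym_mat_2: "centrosymmetric (centrosym_mat_2 a b)"
  using centrosymmetric_dim_2[OF centrosym_mat_2_carrier] by blast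

lemma centrosymmetric_centrosym_mat_3: "centrosymmetric (centrosym_mat_3 a b c d e)"
  using centrosymmetric_dim_3[OF centrosym_mat_3_carrier] by blast

lemma eigenvalue_real_if_char_poly_splits:
  assumes A: "A \<in> carrier_mat n n" and split: "char_poly A = (\<Prod>x\<leftarrow>xs. [:-x, 1:])"
    and ev: "eigenvalue (map_mat complex_of_real A) c"
  shows "c \<in> \<real>"
proof -
  interpret map_poly_comm_ring_hom "complex_of_real" ..
  have "0 = poly (char_poly (map_mat complex_of_real A)) c"
    using eigenvalue_root_char_poly[of "map_mat complex_of_real A" n] A ev by simp
  also have "\<dots> = (\<Prod>x\<leftarrow>xs. c - of_real x)"
    unfolding of_real_hom.char_poly_hom[OF A] split hom_prod_list
    by (simp add: poly_prod_list o_def)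
  finally obtain x where "c = of_real x" by auto
  then show ?thesis by simp
qed

lemma centrosym_mat_3_dominant_root:
  assumes "0 \<le> a" "0 \<le> b" "0 \<le> c" "0 \<le> d" "0 \<le> e"
  obtains xs \<rho> where "char_poly (centrosym_mat_3 a b c d e) = (\<Prod>x\<leftarrow>xs. [:- x, 1:])"
    "\<rho> \<in> set xs" "\<forall>x \<in> set xs. \<bar>x\<bar> \<le> \<rho>" "0 \<le> sum_list xs"
proof -
  define s where "s = a + c + e"
  define q where "q = (a + c) * e - 2 * b * d"
  define r where "r = sqrt (s\<^sup>2 - 4 * q)"
  have discr: "s\<^sup>2 - 4 * q = (a + c - e)\<^sup>2 + 8 * (b * d)"
    unfolding s_def q_def by (simp add: algebra_simps power2_eq_square)
  then have "\<bar>a + c - e\<bar> \<le> r"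
    unfolding r_def using assms by (metis le_add_same_cancel1 mult_nonneg_nonneg real_sqrt_abs
        real_sqrt_le_mono zero_le_numeral)
  then have dom: "\<bar>a - c\<bar> \<le> (s + r) / 2" "\<bar>(s - r) / 2\<bar> \<le> (s + r) / 2"
    using assms unfolding s_def abs_le_iff by (auto simp: field_simps)
  have "[:q, - s, 1:] = [:- ((s + r) / 2), 1:] * [:- ((s - r) / 2), 1:]"
    unfolding r_def using assms discr by (intro quadratic_poly_split) simp
  then have cp: "char_poly (centrosym_mat_3 a b c d e) = (\<Prod>x\<leftarrow>[a - c, (s + r) / 2, (s - r) / 2]. [:- x, 1:])"
    unfolding char_poly_centrosym_mat_3 s_def[symmetric] q_def[symmetric]
    by (simp only: list.map prod_list.Cons prod_list.Nil mult_1_right)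
  have "0 \<le> sum_list [a - c, (s + r) / 2, (s - r) / 2]"
    using assms unfolding s_def by (simp add: field_simps)
  with dom show thesis by (intro that[OF cp, of "(s + r) / 2"]) auto
qed

lemma nonneg_centrosymmetric_dominant_root:
  assumes n: "1 \<le> n" "n \<le> 3" and A: "A \<in> carrier_mat n n"
    and nonneg: "nonneg_mat A" and centro: "centrosymmetric A"
  obtains xs \<rho> where "char_poly A = (\<Prod>x\<leftarrow>xs. [:- x, 1:])"
    "\<rho> \<in> set xs" "\<forall>x \<in> set xs. \<bar>x\<bar> \<le> \<rho>" "0 \<le> sum_list xs"
proof -
  consider "n = 1" | "n = 2" | "n = 3" using n by linarith
  then show thesis
  proof cases
    case 1
    then have "char_poly A = (\<Prod>x\<leftarrow>[A $$ (0, 0)]. [:- x, 1:])"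
      using A char_poly_dim_1 by simp
    moreover have "0 \<le> A $$ (0, 0)" using nonneg A 1 by (simp add: nonneg_mat_def)
    ultimately show thesis by (intro that[of "[A $$ (0, 0)]"]) auto
  next
    case 2
    then obtain a b where A_eq: "A = centrosym_mat_2 a b"
      using A centro centrosymmetric_dim_2 by blast
    with nonneg have "0 \<le> a" "0 \<le> b" by (simp_all add: nonneg_centrosym_mat_2)
    moreover have "char_poly A = (\<Prod>x\<leftarrow>[a + b, a - b]. [:- x, 1:])"
      by (simp only: A_eq char_poly_centrosym_mat_2 list.map prod_list.Cons prod_list.Nil mult_1_right)
    ultimately show thesis by (intro that[of "[a + b, a - b]" "a + b"]) auto
  next
    case 3
    then obtain a b c d e where A_eq: "A = centrosym_mat_3 a b c d e"
      using A centro centrosymmetric_dim_3 by blast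
    with nonneg have "0 \<le> a" "0 \<le> b" "0 \<le> c" "0 \<le> d" "0 \<le> e"
      by (simp_all add: nonneg_centrosym_mat_3)
    then obtain xs \<rho> where "char_poly (centrosym_mat_3 a b c d e) = (\<Prod>x\<leftarrow>xs. [:- x, 1:])"
      "\<rho> \<in> set xs" "\<forall>x \<in> set xs. \<bar>x\<bar> \<le> \<rho>" "0 \<le> sum_list xs"
      by (rule centrosym_mat_3_dominant_root)
    then show thesis by (rule that[unfolded A_eq])
  qed
qed

lemma spectrum_realised_dim_1:
  assumes "0 \<le> l"
  shows "\<exists>A \<in> carrier_mat 1 1. nonneg_mat A \<and> centrosymmetric A \<and> char_poly A = [:- l, 1:]"
proof -
  let ?A = "mat 1 1 (\<lambda>_. l) :: real mat"
  have carrier: "?A \<in> carrier_mat 1 1" by simp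
  moreover have "centrosymmetric ?A" unfolding centrosymmetric_iff[OF carrier] by simp
  ultimately show ?thesis
    using assms by (intro bexI[of _ ?A]) (auto simp: nonneg_mat_def char_poly_dim_1)
qed

lemma spectrum_realised_dim_2:
  assumes "\<bar>l2\<bar> \<le> l1"
  shows "\<exists>A \<in> carrier_mat 2 2. nonneg_mat A \<and> centrosymmetric A
    \<and> char_poly A = [:- l1, 1:] * [:- l2, 1:]"
proof -
  let ?a = "(l1 + l2) / 2" and ?b = "(l1 - l2) / 2"
  have "?a + ?b = l1" "?a - ?b = l2" by (simp_all add: field_simps)
  then have "char_poly (centrosym_mat_2 ?a ?b) = [:- l1, 1:] * [:- l2, 1:]"
    by (simp only: char_poly_centrosym_mat_2)
  moreover have "nonneg_mat (centrosym_mat_2 ?a ?b)"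
    using assms by (auto simp: nonneg_centrosym_mat_2 abs_le_iff)
  ultimately show ?thesis
    using centrosymmetric_centrosym_mat_2 centrosym_mat_2_carrier by blast
qed

lemma spectrum_realised_dim_3:
  assumes ord: "l3 \<le> l2" "l2 \<le> l1" and dom: "\<bar>l3\<bar> \<le> l1" and tr: "0 \<le> l1 + l2 + l3"
  shows "\<exists>A \<in> carrier_mat 3 3. nonneg_mat A \<and> centrosymmetric A
    \<and> char_poly A = [:- l1, 1:] * [:- l2, 1:] * [:- l3, 1:]"
proof -
  obtain a b c d e :: real where nonneg: "0 \<le> a" "0 \<le> b" "0 \<le> c" "0 \<le> d" "0 \<le> e"
    and coeffs: "a - c = l3" "a + c + e = l1 + l2" "(a + c) * e - 2 * b * d = l1 * l2"
  proof (cases "0 \<le> l2")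
    case True
    with ord dom show thesis
      by (intro that[of "(l1 + l3) / 2" 0 "(l1 - l3) / 2" 0 l2]) (auto simp: field_simps)
  next
    case False
    have "0 \<le> - l1 * l2 / 2" using False dom by (simp add: mult_nonneg_nonpos)
    with ord dom tr show thesis
      by (intro that[of "(l1 + l2 + l3) / 2" 1 "(l1 + l2 - l3) / 2" "- l1 * l2 / 2" 0])
        (auto simp: field_simps)
  qed
  have "char_poly (centrosym_mat_3 a b c d e) = [:- l3, 1:] * [:l1 * l2, - (l1 + l2), 1:]"
    by (simp only: char_poly_centrosym_mat_3 coeffs)
  also have "\<dots> = [:- l1, 1:] * [:- l2, 1:] * [:- l3, 1:]"
    by (simp add: algebra_simps)
  finally have "char_poly (centrosym_mat_3 a b c d e) = [:- l1, 1:] * [:- l2, 1:] * [:- l3, 1:]" .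
  moreover have "nonneg_mat (centrosym_mat_3 a b c d e)"
    using nonneg by (simp add: nonneg_centrosym_mat_3)
  ultimately show ?thesis
    using centrosymmetric_centrosym_mat_3 centrosym_mat_3_carrier by blast
qed

lemma spectrum_realised:
  fixes lam :: "nat \<Rightarrow> real"
  assumes n: "1 \<le> n" "n \<le> 3" and desc: "\<forall>i \<in> {1..<n}. lam (Suc i) \<le> lam i"
    and dom: "\<bar>lam n\<bar> \<le> lam 1" and tr: "0 \<le> (\<Sum>j = 1..n. lam j)"
  shows "\<exists>A \<in> carrier_mat n n. nonneg_mat A \<and> centrosymmetric A
    \<and> char_poly A = (\<Prod>i = 1..n. [:- lam i, 1:])"
proof -
  have "{1..2 :: nat} = {1, 2}" "{1..3 :: nat} = {1, 2, 3}" by auto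
  then have prod: "(\<Prod>i = 1..2. f i) = f 1 * f 2" "(\<Prod>i = 1..3. f i) = f 1 * f 2 * f 3"
    and sum: "(\<Sum>i = 1..3. g i) = g 1 + g 2 + g 3" for f :: "nat \<Rightarrow> real poly" and g :: "nat \<Rightarrow> real"
    by (simp_all add: algebra_simps)
  consider "n = 1" | "n = 2" | "n = 3" using n by linarith
  then show ?thesis
  proof cases
    case 1
    then show ?thesis using spectrum_realised_dim_1[of "lam 1"] dom by simp
  next
    case 2
    show ?thesis unfolding 2 prod using spectrum_realised_dim_2[of "lam 2" "lam 1"] dom 2 by simp
  next
    case 3
    have "lam 2 \<le> lam 1" "lam 3 \<le> lam 2"
      using desc[rule_format, of 1] desc[rule_format, of 2] 3 by (simp_all add: numeral_eq_Suc)
    moreover have "0 \<le> lam 1 + lam 2 + lam 3" using tr unfolding 3 sum .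
    ultimately show ?thesis
      unfolding 3 prod using spectrum_realised_dim_3[of "lam 3" "lam 2" "lam 1"] dom 3 by simp
  qed
qed

theorem theorem3p1:
  fixes n :: nat
  assumes "1 \<le> n" and "n \<le> 3"
  shows "(\<forall>A \<in> carrier_mat n n. nonneg_mat A \<and> centrosymmetric A \<longrightarrow>
            (\<forall>c. eigenvalue (map_mat complex_of_real A) c \<longrightarrow> c \<in> \<real>))
       \<and> (\<forall>lam :: nat \<Rightarrow> real. (\<forall>i \<in> {1..<n}. lam i \<ge> lam (Suc i)) \<longrightarrow>
            ((\<exists>A \<in> carrier_mat n n. nonneg_mat A \<and> centrosymmetric A \<and>
                 char_poly A = (\<Prod>i = 1..n. [:- lam i, 1:]))
             \<longleftrightarrow> (lam 1 \<ge> \<bar>lam n\<bar> \<and> (\<Sum>j = 1..n. lam j) \<ge> 0)))"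
proof (intro conjI allI ballI impI)
  fix A c
  assume A: "A \<in> carrier_mat n n" and "nonneg_mat A \<and> centrosymmetric A"
    and ev: "eigenvalue (map_mat complex_of_real A) c"
  then obtain xs :: "real list" where "char_poly A = (\<Prod>x\<leftarrow>xs. [:- x, 1:])"
    using nonneg_centrosymmetric_dominant_root[OF assms A] by metis
  then show "c \<in> \<real>" by (rule eigenvalue_real_if_char_poly_splits[OF A _ ev])
next
  fix lam :: "nat \<Rightarrow> real"
  assume desc: "\<forall>i \<in> {1..<n}. lam (Suc i) \<le> lam i"
  show "(\<exists>A \<in> carrier_mat n n. nonneg_mat A \<and> centrosymmetric A
      \<and> char_poly A = (\<Prod>i = 1..n. [:- lam i, 1:]))
    \<longleftrightarrow> \<bar>lam n\<bar> \<le> lam 1 \<and> 0 \<le> (\<Sum>j = 1..n. lam j)"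
  proof
    assume "\<exists>A \<in> carrier_mat n n. nonneg_mat A \<and> centrosymmetric A
      \<and> char_poly A = (\<Prod>i = 1..n. [:- lam i, 1:])"
    then obtain A where A: "A \<in> carrier_mat n n" "nonneg_mat A" "centrosymmetric A"
      and spec: "char_poly A = (\<Prod>i = 1..n. [:- lam i, 1:])" by blast
    obtain xs \<rho> where split: "char_poly A = (\<Prod>x\<leftarrow>xs. [:- x, 1:])"
      and dom: "\<rho> \<in> set xs" "\<forall>x \<in> set xs. \<bar>x\<bar> \<le> \<rho>" and tr: "0 \<le> sum_list xs"
      by (rule nonneg_centrosymmetric_dominant_root[OF assms A])
    have "(\<Prod>i = 1..n. [:- lam i, 1:]) = (\<Prod>x\<leftarrow>xs. [:- x, 1:])"
      using spec split by simp
    then show "\<bar>lam n\<bar> \<le> lam 1 \<and> 0 \<le> (\<Sum>j = 1..n. lam j)"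
      by (rule spectral_bounds_of_dominant_root[OF assms(1) desc _ dom tr])
  next
    assume "\<bar>lam n\<bar> \<le> lam 1 \<and> 0 \<le> (\<Sum>j = 1..n. lam j)"
    then show "\<exists>A \<in> carrier_mat n n. nonneg_mat A \<and> centrosymmetric A
      \<and> char_poly A = (\<Prod>i = 1..n. [:- lam i, 1:])"
      using spectrum_realised[OF assms desc] by blast
  qed
qed

end
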